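(* Let $\alpha:\mathbb{V}\to\mathbb{U}$ be a morphism between persistence modules of length $n$. Then for all integers $1\le a\le b\le n$, $$\sum_{b'=1}^{n}\sum_{a'=1}^{b'}\mathcal{M}^{\alpha}(a,b,a',b')\ \le\ \dim S^{\mathbb{V}}_{a,b}-\dim S^{\mathbb{V}}_{a-1,b}=\mathcal{D}^{\mathbb{V}}(a,b),$$ and for all integers $1\le a'\le b'\le n$, $$\sum_{b=1}^{n}\sum_{a=1}^{b}\mathcal{M}^{\alpha}(a,b,a',b')\ \le\ \dim S^{\mathbb{U}}_{a',b'}-\dim S^{\mathbb{U}}_{a'-1,b'}=\mathcal{D}^{\mathbb{U}}(a',b').$$
   Context: Fix a field $\mathbf F$; all vector spaces are finite-dimensional over $\mathbf F$. A persistence module $\mathbb{V}$ of length $n$ consists of vector spaces $V_1,\dots,V_n$ and linear maps $f^{\mathbb V}_i:V_i\to V_{i+1}$ ($1\le i\le n-1$). Conventions: $V_i=0$ for every integer $i\le 0$ or $i\ge n+1$, and every map $f^{\mathbb V}_i$ with domain or codomain $0$ is the zero map (in particular $f^{\mathbb V}_0:0\to V_1$ and $f^{\mathbb V}_n:V_n\to 0$). For integers $a\le b$, $f^{\mathbb V}_{a,b}=f^{\mathbb V}_{b-1}\circ\cdots\circ f^{\mathbb V}_a:V_a\to V_b$, with $f^{\mathbb V}_{a,a}=\mathrm{id}$; also $f^{\mathbb V}_b=f^{\mathbb V}_{b,b+1}$. A morphism $\alpha:\mathbb V\to\mathbb U$ of persistence modules of length $n$ is a family of linear maps $\alpha_i:V_i\to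 U_i$ with $\alpha_{i+1}\circ f^{\mathbb V}_i=f^{\mathbb U}_i\circ\alpha_i$ for all $i$ (with $\alpha_i=0$ for $i$ outside $[1,n]$). For a subspace $A\subseteq U_i$, $\alpha_i^{-1}(A)$ denotes the preimage, so $\alpha_i^{-1}(0)=\ker\alpha_i$. For integers $a,b$ define $S^{\mathbb V}_{a,b}=f^{\mathbb V}_{a,b}(V_a)\cap\ker f^{\mathbb V}_b$ if $1\le a\le b\le n$ and $S^{\mathbb V}_{a,b}=0$ otherwise, and $\mathcal D^{\mathbb V}(a,b)=\dim S^{\mathbb V}_{a,b}-\dim S^{\mathbb V}_{a-1,b}$ (the multiplicity of the interval $[a,b]$ in the barcode of $\mathbb V$). For a morphism $\alpha:\mathbb V\to\mathbb U$ define, for integers $a,b,a',b'$, $$\mathcal X^{\alpha}(a,b,a',b')=\dim\big[S^{\mathbb V}_{a,b}\cap f^{\mathbb V}_{b',b}\big(\alpha_{b'}^{-1}(S^{\mathbb U}_{a',b'})\big)\big]-\dim\big[S^{\mathbb V}_{a,b}\cap f^{\mathbb V}_{b',b}\big(\ker\alpha_{b'}\big)\big]$$ if $b'\le b\le n$, and $\mathcal X^{\alpha}(a,b,a',b')=0$ otherwise. Define $$\mathcal M^{\alpha}(a,b,a',b')=\mathcal X^{\alpha}(a,b,a',b')-\mathcal X^{\alpha}(a-1,b,a',b')-\mathcal X^{\alpha}(a,b,a'-1,b')+\mathcal X^{\alpha}(a-1,b,a'-1,b').$$ *)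

theory Defs
  imports Complex_Main
begin

text \<open>
  A persistence module of length n over a field 'f is given by
  an ambient vector space (type 'v with scalar multiplication scale, assumed to
  satisfy vector_space scale), a family V :: nat => 'v set of finite-dimensional
  subspaces (only V 1, ..., V n matter) and maps f :: nat => 'v => 'v, where
  f i is linear on V i and maps V i into V (i+1) for 1 <= i < n.
\<close>

definition lin_on :: "('f::field \<Rightarrow> 'v::ab_group_add \<Rightarrow> 'v) \<Rightarrow> ('f \<Rightarrow> 'w::ab_group_add \<Rightarrow> 'w)
    \<Rightarrow> 'v set \<Rightarrow> ('v \<Rightarrow> 'w) \<Rightarrow> bool" where
  "lin_on s1 s2 A g \<longleftrightarrow>
     (\<forall>x\<in>A. \<forall>y\<in>A. g (x + y) = g x + g y) \<and> (\<forall>c. \<forall>x\<in>A. g (s1 c x) = s2 c (g x))"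

definition pers_module :: "('f::field \<Rightarrow> 'v::ab_group_add \<Rightarrow> 'v) \<Rightarrow> nat
    \<Rightarrow> (nat \<Rightarrow> 'v set) \<Rightarrow> (nat \<Rightarrow> 'v \<Rightarrow> 'v) \<Rightarrow> bool" where
  "pers_module s n V f \<longleftrightarrow>
     vector_space s \<and>
     (\<forall>i. 1 \<le> i \<and> i \<le> n \<longrightarrow> module.subspace s (V i)
          \<and> (\<exists>B. finite B \<and> B \<subseteq> V i \<and> V i = module.span s B)) \<and>
     (\<forall>i. 1 \<le> i \<and> i < n \<longrightarrow> lin_on s s (V i) (f i) \<and> f i ` V i \<subseteq> V (Suc i))"

definition pm_morphism :: "('f::field \<Rightarrow> 'v::ab_group_add \<Rightarrow> 'v) \<Rightarrow> ('f \<Rightarrow> 'u::ab_group_add \<Rightarrow> 'u)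
    \<Rightarrow> nat \<Rightarrow> (nat \<Rightarrow> 'v set) \<Rightarrow> (nat \<Rightarrow> 'v \<Rightarrow> 'v) \<Rightarrow> (nat \<Rightarrow> 'u set) \<Rightarrow> (nat \<Rightarrow> 'u \<Rightarrow> 'u)
    \<Rightarrow> (nat \<Rightarrow> 'v \<Rightarrow> 'u) \<Rightarrow> bool" where
  "pm_morphism sV sU n V f U g \<alpha> \<longleftrightarrow>
     (\<forall>i. 1 \<le> i \<and> i \<le> n \<longrightarrow> lin_on sV sU (V i) (\<alpha> i) \<and> \<alpha> i ` V i \<subseteq> U i) \<and>
     (\<forall>i. 1 \<le> i \<and> i < n \<longrightarrow> (\<forall>x\<in>V i. \<alpha> (Suc i) (f i x) = g i (\<alpha> i x)))"

definition pmV :: "nat \<Rightarrow> (nat \<Rightarrow> 'v::zero set) \<Rightarrow> nat \<Rightarrow> 'v set" where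
  "pmV n V i = (if 1 \<le> i \<and> i \<le> n then V i else {0})"

definition pmf :: "nat \<Rightarrow> (nat \<Rightarrow> 'v \<Rightarrow> 'v::zero) \<Rightarrow> nat \<Rightarrow> 'v \<Rightarrow> 'v" where
  "pmf n f i x = (if 1 \<le> i \<and> i < n then f i x else 0)"

text \<open>f_{a,b} = f_{b-1} o ... o f_a (for a <= b), f_{a,a} = id.\<close>
fun fcomp :: "nat \<Rightarrow> (nat \<Rightarrow> 'v \<Rightarrow> 'v::zero) \<Rightarrow> nat \<Rightarrow> nat \<Rightarrow> 'v \<Rightarrow> 'v" where
  "fcomp n f a 0 = id"
| "fcomp n f a (Suc k) = pmf n f (a + k) \<circ> fcomp n f a k"

definition fab :: "nat \<Rightarrow> (nat \<Rightarrow> 'v \<Rightarrow> 'v::zero) \<Rightarrow> nat \<Rightarrow> nat \<Rightarrow> 'v \<Rightarrow> 'v" where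
  "fab n f a b = fcomp n f a (b - a)"

definition kerf :: "nat \<Rightarrow> (nat \<Rightarrow> 'v::zero set) \<Rightarrow> (nat \<Rightarrow> 'v \<Rightarrow> 'v) \<Rightarrow> nat \<Rightarrow> 'v set" where
  "kerf n V f b = {x \<in> pmV n V b. pmf n f b x = 0}"

definition Sab :: "nat \<Rightarrow> (nat \<Rightarrow> 'v::zero set) \<Rightarrow> (nat \<Rightarrow> 'v \<Rightarrow> 'v) \<Rightarrow> nat \<Rightarrow> nat \<Rightarrow> 'v set" where
  "Sab n V f a b = (if 1 \<le> a \<and> a \<le> b \<and> b \<le> n
      then fab n f a b ` pmV n V a \<inter> kerf n V f b else {0})"

definition pmD :: "('f::field \<Rightarrow> 'v::ab_group_add \<Rightarrow> 'v) \<Rightarrow> nat \<Rightarrow> (nat \<Rightarrow> 'v set)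
    \<Rightarrow> (nat \<Rightarrow> 'v \<Rightarrow> 'v) \<Rightarrow> nat \<Rightarrow> nat \<Rightarrow> int" where
  "pmD s n V f a b = int (vector_space.dim s (Sab n V f a b))
                   - int (vector_space.dim s (Sab n V f (a - 1) b))"

definition apre :: "nat \<Rightarrow> (nat \<Rightarrow> 'v::zero set) \<Rightarrow> (nat \<Rightarrow> 'v \<Rightarrow> 'u) \<Rightarrow> nat \<Rightarrow> 'u set \<Rightarrow> 'v set" where
  "apre n V \<alpha> i A = {x \<in> pmV n V i. \<alpha> i x \<in> A}"

definition pmX :: "('f::field \<Rightarrow> 'v::ab_group_add \<Rightarrow> 'v) \<Rightarrow> nat
    \<Rightarrow> (nat \<Rightarrow> 'v set) \<Rightarrow> (nat \<Rightarrow> 'v \<Rightarrow> 'v) \<Rightarrow> (nat \<Rightarrow> 'u::ab_group_add set) \<Rightarrow> (nat \<Rightarrow> 'u \<Rightarrow> 'u)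
    \<Rightarrow> (nat \<Rightarrow> 'v \<Rightarrow> 'u) \<Rightarrow> nat \<Rightarrow> nat \<Rightarrow> nat \<Rightarrow> nat \<Rightarrow> int" where
  "pmX sV n V f U g \<alpha> a b a' b' =
     (if b' \<le> b \<and> b \<le> n then
        int (vector_space.dim sV (Sab n V f a b \<inter> fab n f b' b ` apre n V \<alpha> b' (Sab n U g a' b')))
      - int (vector_space.dim sV (Sab n V f a b \<inter> fab n f b' b ` apre n V \<alpha> b' {0}))
      else 0)"

definition pmM :: "('f::field \<Rightarrow> 'v::ab_group_add \<Rightarrow> 'v) \<Rightarrow> nat
    \<Rightarrow> (nat \<Rightarrow> 'v set) \<Rightarrow> (nat \<Rightarrow> 'v \<Rightarrow> 'v) \<Rightarrow> (nat \<Rightarrow> 'u::ab_group_add set) \<Rightarrow> (nat \<Rightarrow> 'u \<Rightarrow> 'u)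
    \<Rightarrow> (nat \<Rightarrow> 'v \<Rightarrow> 'u) \<Rightarrow> nat \<Rightarrow> nat \<Rightarrow> nat \<Rightarrow> nat \<Rightarrow> int" where
  "pmM sV n V f U g \<alpha> a b a' b' =
       pmX sV n V f U g \<alpha> a b a' b' - pmX sV n V f U g \<alpha> (a - 1) b a' b'
     - pmX sV n V f U g \<alpha> a b (a' - 1) b' + pmX sV n V f U g \<alpha> (a - 1) b (a' - 1) b'"

end

theory Submission
  imports Defs
begin

text \<open>
  Both inequalities come from telescoping. Summing \<open>M\<close> over the birth \<open>a'\<close> in \<open>U\<close> leaves
  \<open>X(a,b,b',b') - X(a-1,b,b',b') = \<psi>(P\<^sub>b\<^sub>') - \<psi>(Q\<^sub>b\<^sub>')\<close>, where
  \<open>\<psi>(T) = dim (S\<^sub>a\<^sub>,\<^sub>b \<inter> T) - dim (S\<^sub>a\<^sub>-\<^sub>1\<^sub>,\<^sub>b \<inter> T)\<close> and \<open>P\<^sub>k\<close>, \<open>Q\<^sub>k\<close> are the images in \<open>V\<^sub>b\<close>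
  of \<open>\<alpha>\<^sub>k\<^sup>-\<^sup>1(ker g\<^sub>k)\<close> and \<open>ker \<alpha>\<^sub>k\<close>. Since \<open>S\<^sub>a\<^sub>-\<^sub>1\<^sub>,\<^sub>b \<subseteq> S\<^sub>a\<^sub>,\<^sub>b\<close>, \<open>\<psi>\<close> is monotone in \<open>T\<close>
  (a basis-extension argument), and naturality of \<open>\<alpha>\<close> gives \<open>P\<^sub>k \<subseteq> Q\<^sub>k\<^sub>+\<^sub>1\<close>; so the sum
  over \<open>b'\<close> is at most \<open>\<psi>(V\<^sub>b) - \<psi>(0) = D\<^sup>V(a,b)\<close>.

  Summing over the birth \<open>a\<close> in \<open>V\<close> instead leaves, for \<open>A = \<alpha>\<^sub>b\<^sub>'\<^sup>-\<^sup>1(S\<^sub>a\<^sub>'\<^sub>,\<^sub>b\<^sub>')\<close>, the terms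
  \<open>dim (ker f\<^sub>b \<inter> f\<^sub>b\<^sub>'\<^sub>,\<^sub>b(A))\<close>. By rank-nullity they telescope to \<open>dim A\<close>, since every
  vector dies after \<open>V\<^sub>n\<close>. Rank-nullity for \<open>\<alpha>\<^sub>b\<^sub>'\<close> turns the resulting difference into
  \<open>\<psi>(im \<alpha>\<^sub>b\<^sub>')\<close>, now formed in \<open>U\<^sub>b\<^sub>'\<close>, which is at most \<open>\<psi>(U\<^sub>b\<^sub>') = D\<^sup>U(a',b')\<close>.
\<close>

section \<open>Dimension counting in finitely generated subspaces\<close>

context vector_space
begin

lemma dim_eq_0_if_subset_zero: "S \<subseteq> {0} \<Longrightarrow> dim S = 0"
  using dim_le_card[of S "{}"] by simp

lemma span_Int_span_Diff_subset_zero: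
  assumes "independent C" "finite C" "B \<subseteq> C"
  shows "span B \<inter> span (C - B) \<subseteq> {0}"
proof
  fix x assume x: "x \<in> span B \<inter> span (C - B)"
  have "finite B" using assms(2,3) by (rule finite_subset[rotated])
  then obtain u where u: "x = (\<Sum>c\<in>B. u c *s c)"
    using x span_finite[of B] by auto
  obtain w where w: "x = (\<Sum>c\<in>C - B. w c *s c)"
    using x span_finite[of "C - B"] assms(2) by auto
  define t where "t c = (if c \<in> B then u c else - w c)" for c
  have "(\<Sum>c\<in>C. t c *s c) = (\<Sum>c\<in>C - B. t c *s c) + (\<Sum>c\<in>B. t c *s c)"
    by (rule sum.subset_diff[OF assms(3,2)])
  also have "\<dots> = - x + x"
  proof -
    have "(\<Sum>c\<in>C - B. t c *s c) = - x"
      unfolding w t_def by (simp add: sum_negf)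
    moreover have "(\<Sum>c\<in>B. t c *s c) = x"
      unfolding u t_def by simp
    ultimately show ?thesis by simp
  qed
  finally have "\<forall>c\<in>C. t c = 0"
    using independentD[OF assms(1,2) order_refl] by simp
  moreover have "u c = t c" if "c \<in> B" for c
    using that by (simp add: t_def)
  ultimately have "\<forall>c\<in>B. u c = 0"
    using assms(3) by auto
  then show "x \<in> {0}"
    using u by simp
qed

lemma independent_Un:
  assumes "independent S" "independent T" "finite T" "span S \<inter> span T \<subseteq> {0}"
  shows "independent (S \<union> T)"
  using assms(3,2,4)
proof (induction T rule: finite_induct)
  case empty
  then show ?case using assms(1) by simp
next
  case (insert t T)
  have T: "independent T" "t \<notin> span T"
    using insert.prems(1) insert.hyps(2) by (simp_all add: independent_insert)
  have "span S \<inter> span T \<subseteq> {0}"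
    using insert.prems(2) span_mono[of T "insert t T"] by blast
  with T(1) have indep: "independent (S \<union> T)" by (rule insert.IH)
  have "t \<notin> span (S \<union> T)"
  proof
    assume "t \<in> span (S \<union> T)"
    then obtain x y where xy: "t = x + y" "x \<in> span S" "y \<in> span T"
      by (auto simp: span_Un)
    have "x = t - y" using xy(1) by simp
    also have "\<dots> \<in> span (insert t T)"
      using xy(3) span_mono[of T "insert t T"] by (blast intro: span_diff span_base)
    finally have "x = 0" using insert.prems(2) xy(2) by blast
    then show False using T(2) xy by simp
  qed
  then show ?case using independent_insertI[OF _ indep] by simp
qed

lemma card_le_dim_if_independent:
  assumes "independent B" "B \<subseteq> V" "finite W" "V \<subseteq> span W"
  shows "card B \<le> dim V"
proof -
  obtain C where C: "B \<subseteq> C" "C \<subseteq> V" "independent C" "V \<subseteq> span C"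
    using maximal_independent_subset_extend[OF assms(2,1)] by metis
  have "finite C"
    using independent_span_bound[OF assms(3) C(3)] C(2) assms(4) by blast
  then show ?thesis
    using card_mono[OF _ C(1)] basis_card_eq_dim[OF C(2,4,3)] by simp
qed

lemma dim_add_dim_Int_le:
  assumes "subspace X" "subspace Z" "X \<subseteq> Y" "finite W" "Y \<subseteq> span W"
  shows "dim X + dim (Y \<inter> Z) \<le> dim Y + dim (X \<inter> Z)"
proof -
  obtain B where B: "B \<subseteq> X \<inter> Z" "independent B" "X \<inter> Z \<subseteq> span B" "card B = dim (X \<inter> Z)"
    using basis_exists by blast
  obtain C where C: "B \<subseteq> C" "C \<subseteq> Y \<inter> Z" "independent C" "Y \<inter> Z \<subseteq> span C"
    using maximal_independent_subset_extend[of B "Y \<inter> Z"] B(1,2) assms(3) by blast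
  obtain D where D: "B \<subseteq> D" "D \<subseteq> X" "independent D" "X \<subseteq> span D"
    using maximal_independent_subset_extend[of B X] B(1,2) by blast
  have fin: "finite C" "finite D"
    using independent_span_bound[OF assms(4)] C(2,3) D(2,3) assms(3,5) by blast+
  have disjoint_spans: "span D \<inter> span (C - B) \<subseteq> {0}"
  proof
    fix x assume x: "x \<in> span D \<inter> span (C - B)"
    have "x \<in> X" using x span_minimal[OF D(2) assms(1)] by blast
    moreover have "x \<in> Z" using x span_minimal[of "C - B" Z] C(2) assms(2) by blast
    ultimately have "x \<in> span B" using B(3) by blast
    then show "x \<in> {0}" using x span_Int_span_Diff_subset_zero[OF C(3) fin(1) C(1)] by blast
  qed
  \<comment> \<open>a basis of \<open>X\<close> stays independent when the part of a basis of \<open>Y \<inter> Z\<close> outside \<open>X \<inter> Z\<close> is added\<close>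
  have "independent (D \<union> (C - B))"
    using independent_Un[OF D(3) independent_mono[OF C(3)]] disjoint_spans fin(1) by blast
  then have card_le: "card (D \<union> (C - B)) \<le> dim Y"
    by (rule card_le_dim_if_independent[OF _ _ assms(4,5)]) (use C(2) D(2) assms(3) in blast)
  have "D \<inter> (C - B) = {}"
  proof -
    have "D \<inter> (C - B) \<subseteq> {0}"
      using disjoint_spans span_superset[of D] span_superset[of "C - B"] by blast
    then show ?thesis using D(3) dependent_zero[of D] by blast
  qed
  then have "card (D \<union> (C - B)) = card D + (card C - card B)"
    using fin card_Un_disjoint[of D "C - B"] card_Diff_subset[OF finite_subset[OF C(1) fin(1)] C(1)]
    by simp
  moreover have "card B \<le> card C" using card_mono[OF fin(1) C(1)] .
  moreover have "card D = dim X" "card C = dim (Y \<inter> Z)"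
    using basis_card_eq_dim[OF D(2,4,3)] basis_card_eq_dim[OF C(2,4,3)] by simp_all
  ultimately show ?thesis using card_le B(4) by linarith
qed

lemma dim_Int_diff_mono:
  assumes "subspace S0" "subspace S1" "S0 \<subseteq> S1" "subspace T1" "T1 \<subseteq> T2"
    and "finite W" "T2 \<subseteq> span W"
  shows "int (dim (S1 \<inter> T1)) - int (dim (S0 \<inter> T1)) \<le> int (dim (S1 \<inter> T2)) - int (dim (S0 \<inter> T2))"
proof -
  have eq: "(S1 \<inter> T2) \<inter> S0 = S0 \<inter> T2" "(S1 \<inter> T1) \<inter> S0 = S0 \<inter> T1"
    using assms(3) by auto
  have "S1 \<inter> T1 \<subseteq> S1 \<inter> T2" "S1 \<inter> T2 \<subseteq> span W"
    using assms(5,7) by auto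
  from dim_add_dim_Int_le[OF subspace_inter[OF assms(2,4)] assms(1) this(1) assms(6) this(2)]
  show ?thesis unfolding eq by linarith
qed

end

lemma lin_on_comp:
  "lin_on s1 s2 A g \<Longrightarrow> g ` A \<subseteq> B \<Longrightarrow> lin_on s2 s3 B h \<Longrightarrow> lin_on s1 s3 A (h \<circ> g)"
  unfolding lin_on_def by (auto simp: image_subset_iff)

lemma lin_on_subset: "lin_on s1 s2 A g \<Longrightarrow> B \<subseteq> A \<Longrightarrow> lin_on s1 s2 B g"
  unfolding lin_on_def by blast

context vector_space_pair
begin

text \<open>Extending to a global linear map gives access to the library theory of linear maps.\<close>
lemma lin_on_extend:
  assumes g: "lin_on s1 s2 A g" and A: "vs1.subspace A"
  obtains h where "Vector_Spaces.linear s1 s2 h" "\<And>x. x \<in> A \<Longrightarrow> h x = g x"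
proof -
  obtain B where B: "B \<subseteq> A" "vs1.independent B" "A \<subseteq> vs1.span B"
    using vs1.maximal_independent_subset[of A] by blast
  obtain h where h: "Vector_Spaces.linear s1 s2 h" "\<forall>x\<in>B. h x = g x"
    using linear_independent_extend[OF B(2), of g] by auto
  have g_add: "g (x + y) = g x + g y" if "x \<in> A" "y \<in> A" for x y
    using g that unfolding lin_on_def by blast
  have g_scale: "g (c *a x) = c *b g x" if "x \<in> A" for x c
    using g that unfolding lin_on_def by blast
  have "h 0 = g 0"
    using g_add[OF vs1.subspace_0[OF A] vs1.subspace_0[OF A]] by (simp add: linear_0[OF h(1)])
  have "vs1.subspace {x \<in> A. h x = g x}"
    unfolding vs1.subspace_def
  proof (intro conjI ballI allI)
    show "0 \<in> {x \<in> A. h x = g x}"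
      using \<open>h 0 = g 0\<close> vs1.subspace_0[OF A] by blast
  next
    fix x y assume "x \<in> {x \<in> A. h x = g x}" "y \<in> {x \<in> A. h x = g x}"
    then have xy: "x \<in> A" "y \<in> A" "h x = g x" "h y = g y" by blast+
    have "h (x + y) = g (x + y)"
      by (simp only: linear_add[OF h(1)] g_add[OF xy(1,2)] xy(3,4))
    then show "x + y \<in> {x \<in> A. h x = g x}"
      using vs1.subspace_add[OF A xy(1,2)] by blast
  next
    fix c x assume "x \<in> {x \<in> A. h x = g x}"
    then have x: "x \<in> A" "h x = g x" by blast+
    have "h (c *a x) = g (c *a x)"
      by (simp only: linear_scale[OF h(1)] g_scale[OF x(1)] x(2))
    then show "c *a x \<in> {x \<in> A. h x = g x}"
      using vs1.subspace_scale[OF A x(1)] by blast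
  qed
  moreover have "B \<subseteq> {x \<in> A. h x = g x}"
    using B(1) h(2) by blast
  ultimately have "vs1.span B \<subseteq> {x \<in> A. h x = g x}"
    by (simp add: vs1.span_minimal)
  then have "A \<subseteq> {x \<in> A. h x = g x}"
    using B(3) by blast
  with that[OF h(1)] show ?thesis by blast
qed

lemma lin_on_subspace_image:
  assumes "lin_on s1 s2 A g" "vs1.subspace A"
  shows "vs2.subspace (g ` A)"
proof -
  obtain h where "Vector_Spaces.linear s1 s2 h" "\<And>x. x \<in> A \<Longrightarrow> h x = g x"
    using lin_on_extend[OF assms] by blast
  then have "g ` A = h ` A" by simp
  then show ?thesis
    using linear_subspace_image[OF \<open>Vector_Spaces.linear s1 s2 h\<close> assms(2)] by simp
qed

lemma lin_on_subspace_preimage: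
  assumes "lin_on s1 s2 A g" "vs1.subspace A" "vs2.subspace T"
  shows "vs1.subspace {x \<in> A. g x \<in> T}"
proof -
  obtain h where h: "Vector_Spaces.linear s1 s2 h" "\<And>x. x \<in> A \<Longrightarrow> h x = g x"
    using lin_on_extend[OF assms(1,2)] by blast
  have "{x \<in> A. g x \<in> T} = A \<inter> {x. h x \<in> T}" using h(2) by auto
  then show ?thesis
    using vs1.subspace_inter[OF assms(2) linear_subspace_linear_preimage[OF h(1) assms(3)]] by simp
qed

theorem rank_nullity_subspace:
  assumes h: "Vector_Spaces.linear s1 s2 h" and A: "vs1.subspace A"
    and W: "finite W" "A \<subseteq> vs1.span W"
  shows "vs1.dim A = vs2.dim (h ` A) + vs1.dim (A \<inter> {x. h x = 0})"
proof -
  let ?K = "A \<inter> {x. h x = 0}"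
  obtain C where C: "C \<subseteq> ?K" "vs1.independent C" "?K \<subseteq> vs1.span C" "card C = vs1.dim ?K"
    using vs1.basis_exists[of ?K] by blast
  obtain B where B: "C \<subseteq> B" "B \<subseteq> A" "vs1.independent B" "A \<subseteq> vs1.span B"
    using vs1.maximal_independent_subset_extend[of C A] C(1,2) by blast
  have finB: "finite B"
    using vs1.independent_span_bound[OF W(1) B(3)] B(2) W(2) by blast
  have span_B: "vs1.span B = A"
    using vs1.span_minimal[OF B(2) A] B(4) by blast
  let ?D = "B - C"
  have "x = 0" if x: "x \<in> vs1.span ?D" "h x = 0" for x
  proof -
    have "x \<in> A" using x(1) vs1.span_mono[of ?D B] span_B by blast
    then have "x \<in> vs1.span C" using x(2) C(3) by blast
    then show "x = 0"
      using x(1) vs1.span_Int_span_Diff_subset_zero[OF B(3) finB B(1)] by blast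
  qed
  then have inj: "inj_on h (vs1.span ?D)"
    using linear_inj_on_iff_eq_0[OF h vs1.subspace_span] by blast
  have indep: "vs2.independent (h ` ?D)"
    using linear_independent_injective_image[OF h vs1.independent_mono[OF B(3)] inj] by blast
  have card_D: "card (h ` ?D) = card ?D"
    using card_image inj_on_subset[OF inj vs1.span_superset] by blast
  have "h ` B \<subseteq> insert 0 (h ` ?D)" using C(1) by auto
  then have "vs2.span (h ` B) = vs2.span (h ` ?D)"
    using vs2.span_mono[of "h ` B" "insert 0 (h ` ?D)"] vs2.span_mono[of "h ` ?D" "h ` B"] by auto
  then have "h ` A = vs2.span (h ` ?D)"
    using linear_span_image[OF h, of B] span_B by simp
  then have "vs2.dim (h ` A) = card ?D"
    using vs2.dim_eq_card_independent[OF indep] card_D by simp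
  also have "\<dots> = card B - card C"
    using card_Diff_subset[OF finite_subset[OF B(1) finB] B(1)] .
  finally show ?thesis
    using vs1.basis_card_eq_dim[OF B(2,4,3)] C(4) card_mono[OF finB B(1)] by simp
qed

corollary lin_on_rank_nullity:
  assumes "lin_on s1 s2 A g" "vs1.subspace A" "finite W" "A \<subseteq> vs1.span W"
  shows "vs1.dim A = vs2.dim (g ` A) + vs1.dim {x \<in> A. g x = 0}"
proof -
  obtain h where h: "Vector_Spaces.linear s1 s2 h" "\<And>x. x \<in> A \<Longrightarrow> h x = g x"
    using lin_on_extend[OF assms(1,2)] by blast
  have "h ` A = g ` A" "A \<inter> {x. h x = 0} = {x \<in> A. g x = 0}"
    using h(2) by auto
  then show ?thesis using rank_nullity_subspace[OF h(1) assms(2-4)] by simp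
qed

end

section \<open>Persistence modules\<close>

lemma fab_self [simp]: "fab n f a a = id"
  by (simp add: fab_def)

lemma fab_Suc_right: "a \<le> b \<Longrightarrow> fab n f a (Suc b) = pmf n f b \<circ> fab n f a b"
  by (simp add: fab_def Suc_diff_le)

lemma fab_Suc_left:
  assumes "a < b"
  shows "fab n f a b = fab n f (Suc a) b \<circ> pmf n f a"
  using Suc_leI[OF assms]
proof (induction b rule: dec_induct)
  case base
  show ?case using fab_Suc_right[of a a n f] by simp
next
  case (step b)
  then show ?case using fab_Suc_right[of a b n f] fab_Suc_right[of "Suc a" b n f] by simp
qed

lemma sum_diff_le_first_last:
  fixes p q :: "nat \<Rightarrow> int"
  assumes "1 \<le> m" "\<And>k. 1 \<le> k \<Longrightarrow> k < m \<Longrightarrow> p k \<le> q (Suc k)"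
  shows "(\<Sum>k=1..m. p k - q k) \<le> p m - q 1"
  using assms
proof (induction m rule: dec_induct)
  case base
  then show ?case by simp
next
  case (step m)
  then have "(\<Sum>k=1..m. p k - q k) \<le> p m - q 1" "p m \<le> q (Suc m)" by simp_all
  then show ?case by (simp add: atLeastAtMostSuc_conv)
qed

locale persistence_module =
  fixes s :: "'f::field \<Rightarrow> 'v::ab_group_add \<Rightarrow> 'v" and n :: nat
    and V :: "nat \<Rightarrow> 'v set" and f :: "nat \<Rightarrow> 'v \<Rightarrow> 'v"
  assumes pers_module: "pers_module s n V f"
begin

sublocale vector_space s
  using pers_module by (simp add: pers_module_def)

sublocale endo: vector_space_pair s s ..

lemma subspace_pmV: "subspace (pmV n V i)"
  using pers_module by (auto simp: pmV_def pers_module_def subspace_def)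

lemma pmV_finite_dim:
  obtains W where "finite W" "pmV n V i \<subseteq> span W"
proof (cases "1 \<le> i \<and> i \<le> n")
  case True
  then obtain W where "finite W" "V i = span W"
    using pers_module by (auto simp: pers_module_def)
  with True that show ?thesis by (simp add: pmV_def)
next
  case False
  then show ?thesis using that[of "{}"] by (auto simp: pmV_def)
qed

lemma lin_on_pmf: "lin_on s s (pmV n V i) (pmf n f i)"
  using pers_module by (auto simp: pmV_def pmf_def pers_module_def lin_on_def)

lemma pmf_pmV: "pmf n f i ` pmV n V i \<subseteq> pmV n V (Suc i)"
  using pers_module subspace_0[OF subspace_pmV, of "Suc i"]
  by (auto simp: pmV_def pmf_def pers_module_def)

lemma lin_on_fab: "a \<le> b \<Longrightarrow> lin_on s s (pmV n V a) (fab n f a b)"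
  and fab_pmV: "a \<le> b \<Longrightarrow> fab n f a b ` pmV n V a \<subseteq> pmV n V b"
proof (induction b rule: dec_induct)
  case base
  show "lin_on s s (pmV n V a) (fab n f a a)" by (simp add: lin_on_def)
  show "fab n f a a ` pmV n V a \<subseteq> pmV n V a" by simp
next
  case (step b)
  show "lin_on s s (pmV n V a) (fab n f a (Suc b))"
    using lin_on_comp[OF step.IH lin_on_pmf] by (simp add: fab_Suc_right step.hyps)
  show "fab n f a (Suc b) ` pmV n V a \<subseteq> pmV n V (Suc b)"
    using step.IH(2) pmf_pmV by (fastforce simp: fab_Suc_right step.hyps)
qed

lemma subspace_fab_image:
  assumes "subspace A" "A \<subseteq> pmV n V a" "a \<le> b"
  shows "subspace (fab n f a b ` A)"
  using endo.lin_on_subspace_image[OF lin_on_subset[OF lin_on_fab[OF assms(3)] assms(2)] assms(1)] .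

lemma subspace_kerf: "subspace (kerf n V f b)"
  using endo.lin_on_subspace_preimage[OF lin_on_pmf subspace_pmV, of "{0}"]
  by (simp add: kerf_def subspace_def)

lemma subspace_Sab: "subspace (Sab n V f a b)"
proof (cases "1 \<le> a \<and> a \<le> b \<and> b \<le> n")
  case True
  then show ?thesis
    using subspace_inter[OF subspace_fab_image[OF subspace_pmV order_refl] subspace_kerf]
    by (simp add: Sab_def)
next
  case False
  then have "Sab n V f a b = {0}"
    unfolding Sab_def by (rule if_not_P)
  then show ?thesis by (simp add: subspace_def)
qed

lemma Sab_pmV: "Sab n V f a b \<subseteq> pmV n V b"
  using subspace_0[OF subspace_pmV] by (auto simp: Sab_def kerf_def)

lemma Sab_diagonal: "1 \<le> b \<Longrightarrow> b \<le> n \<Longrightarrow> Sab n V f b b = kerf n V f b"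
  by (auto simp: Sab_def kerf_def)

lemma Sab_pred_subset:
  assumes "1 \<le> a" "a \<le> b"
  shows "Sab n V f (a - 1) b \<subseteq> Sab n V f a b"
proof (cases "a = 1")
  case True
  then have "Sab n V f (a - 1) b = {0}" by (simp add: Sab_def)
  then show ?thesis using subspace_0[OF subspace_Sab] by simp
next
  case False
  then have "fab n f (a - 1) b = fab n f a b \<circ> pmf n f (a - 1)"
    using fab_Suc_left[of "a - 1" b n f] assms by simp
  moreover have "pmf n f (a - 1) ` pmV n V (a - 1) \<subseteq> pmV n V a"
    using pmf_pmV[of "a - 1"] False assms(1) by simp
  moreover have "1 \<le> a - 1" using False assms(1) by simp
  ultimately show ?thesis
    using assms by (auto simp: Sab_def)
qed

lemma dim_kerf_Int:
  assumes "subspace T" "T \<subseteq> pmV n V b"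
  shows "int (dim (kerf n V f b \<inter> T)) = int (dim T) - int (dim (pmf n f b ` T))"
proof -
  obtain W where "finite W" "pmV n V b \<subseteq> span W" by (rule pmV_finite_dim)
  with assms have "dim T = dim (pmf n f b ` T) + dim {x \<in> T. pmf n f b x = 0}"
    using endo.lin_on_rank_nullity[OF lin_on_subset[OF lin_on_pmf assms(2)]] by blast
  moreover have "kerf n V f b \<inter> T = {x \<in> T. pmf n f b x = 0}"
    using assms(2) by (auto simp: kerf_def)
  ultimately show ?thesis by simp
qed

lemma sum_dim_kerf_Int_fab_image:
  assumes "subspace A" "A \<subseteq> pmV n V a" "a \<le> n"
  shows "(\<Sum>b=a..n. int (dim (kerf n V f b \<inter> fab n f a b ` A))) = int (dim A)"
proof -
  define F where "F b = int (dim (fab n f a b ` A))" for b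
  have "int (dim (kerf n V f b \<inter> fab n f a b ` A)) = F b - F (Suc b)" if "a \<le> b" for b
    using dim_kerf_Int[OF subspace_fab_image[OF assms(1,2) that]] assms(2) fab_pmV[OF that]
    by (auto simp: F_def fab_Suc_right[OF that] image_comp)
  then have "(\<Sum>b=a..n. int (dim (kerf n V f b \<inter> fab n f a b ` A))) = (\<Sum>b=a..n. F b - F (Suc b))"
    by (intro sum.cong) auto
  also have "\<dots> = - (\<Sum>b=a..n. F (Suc b) - F b)"
    by (simp add: sum_negf[symmetric])
  also have "\<dots> = F a - F (Suc n)"
    using sum_Suc_diff[of a n F] assms(3) by simp
  finally have "(\<Sum>b=a..n. int (dim (kerf n V f b \<inter> fab n f a b ` A))) = F a - F (Suc n)" .
  moreover have "fab n f a (Suc n) ` A \<subseteq> {0}"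
    using fab_pmV[of a "Suc n"] assms(2,3) by (auto simp: pmV_def)
  ultimately show ?thesis
    by (simp add: F_def dim_eq_0_if_subset_zero)
qed

lemma pmX_source_birth_0: "pmX s n V f U' g' \<alpha>' 0 b a' b' = 0"
  by (simp add: pmX_def Sab_def dim_eq_0_if_subset_zero)

lemma sum_pmM_over_source_births:
  "(\<Sum>a=1..b. pmM s n V f U' g' \<alpha>' a b a' b')
     = pmX s n V f U' g' \<alpha>' b b a' b' - pmX s n V f U' g' \<alpha>' b b (a' - 1) b'"
  using sum_telescope''[of 0 b "\<lambda>a. pmX s n V f U' g' \<alpha>' a b a' b' - pmX s n V f U' g' \<alpha>' a b (a' - 1) b'"]
  by (simp add: pmM_def pmX_source_birth_0 algebra_simps)

end

lemma pmX_target_birth_0: "pmX sV n V f U g \<alpha> a b 0 b' = 0"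
  by (simp add: pmX_def Sab_def)

lemma sum_pmM_over_target_births:
  "(\<Sum>a'=1..b'. pmM sV n V f U g \<alpha> a b a' b')
     = pmX sV n V f U g \<alpha> a b b' b' - pmX sV n V f U g \<alpha> (a - 1) b b' b'"
  using sum_telescope''[of 0 b' "\<lambda>a'. pmX sV n V f U g \<alpha> a b a' b' - pmX sV n V f U g \<alpha> (a - 1) b a' b'"]
  by (simp add: pmM_def pmX_target_birth_0 algebra_simps)

section \<open>Morphisms of persistence modules\<close>

locale persistence_morphism =
  V: persistence_module sV n V f + U: persistence_module sU n U g
  for sV :: "'f::field \<Rightarrow> 'v::ab_group_add \<Rightarrow> 'v" and sU :: "'f \<Rightarrow> 'u::ab_group_add \<Rightarrow> 'u"
    and n V f U g +
  fixes \<alpha> :: "nat \<Rightarrow> 'v \<Rightarrow> 'u"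
  assumes morphism: "pm_morphism sV sU n V f U g \<alpha>"
begin

sublocale vector_space_pair sV sU ..

lemma lin_on_alpha: "1 \<le> i \<Longrightarrow> i \<le> n \<Longrightarrow> lin_on sV sU (pmV n V i) (\<alpha> i)"
  using morphism by (simp add: pm_morphism_def pmV_def)

lemma alpha_pmV: "1 \<le> i \<Longrightarrow> i \<le> n \<Longrightarrow> \<alpha> i ` pmV n V i \<subseteq> pmV n U i"
  using morphism by (simp add: pm_morphism_def pmV_def)

lemma alpha_pmf:
  "1 \<le> i \<Longrightarrow> i < n \<Longrightarrow> x \<in> pmV n V i \<Longrightarrow> \<alpha> (Suc i) (pmf n f i x) = pmf n g i (\<alpha> i x)"
  using morphism by (simp add: pm_morphism_def pmV_def pmf_def)

lemma subspace_apre: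
  "1 \<le> i \<Longrightarrow> i \<le> n \<Longrightarrow> U.subspace T \<Longrightarrow> V.subspace (apre n V \<alpha> i T)"
  unfolding apre_def by (rule lin_on_subspace_preimage[OF lin_on_alpha V.subspace_pmV])

lemma dim_apre:
  assumes "1 \<le> i" "i \<le> n" "U.subspace T"
  shows "V.dim (apre n V \<alpha> i T) = U.dim (T \<inter> \<alpha> i ` pmV n V i) + V.dim (apre n V \<alpha> i {0})"
proof -
  let ?A = "apre n V \<alpha> i T"
  obtain W where "finite W" "pmV n V i \<subseteq> V.span W" by (rule V.pmV_finite_dim)
  then have "V.dim ?A = U.dim (\<alpha> i ` ?A) + V.dim {x \<in> ?A. \<alpha> i x = 0}"
    using lin_on_rank_nullity[OF lin_on_subset[OF lin_on_alpha[OF assms(1,2)]] subspace_apre[OF assms]]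
    by (auto simp: apre_def)
  moreover have "\<alpha> i ` ?A = T \<inter> \<alpha> i ` pmV n V i" "{x \<in> ?A. \<alpha> i x = 0} = apre n V \<alpha> i {0}"
    using U.subspace_0[OF assms(3)] by (auto simp: apre_def)
  ultimately show ?thesis by simp
qed

lemma fab_image_apre_Sab_subset:
  assumes "1 \<le> k" "k < b" "b \<le> n"
  shows "fab n f k b ` apre n V \<alpha> k (Sab n U g k k) \<subseteq> fab n f (Suc k) b ` apre n V \<alpha> (Suc k) {0}"
proof
  fix x assume "x \<in> fab n f k b ` apre n V \<alpha> k (Sab n U g k k)"
  then obtain v where v: "v \<in> pmV n V k" "\<alpha> k v \<in> kerf n U g k" "x = fab n f k b v"
    using assms U.Sab_diagonal[of k] by (auto simp: apre_def)
  have "pmf n f k v \<in> pmV n V (Suc k)" using V.pmf_pmV v(1) by blast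
  moreover have "\<alpha> (Suc k) (pmf n f k v) = 0"
    using alpha_pmf[OF assms(1) _ v(1)] v(2) assms by (simp add: kerf_def)
  moreover have "x = fab n f (Suc k) b (pmf n f k v)"
    using v(3) fab_Suc_left[OF assms(2), of n f] by simp
  ultimately show "x \<in> fab n f (Suc k) b ` apre n V \<alpha> (Suc k) {0}"
    by (auto simp: apre_def)
qed

theorem sum_pmM_le_source_multiplicity:
  assumes "1 \<le> a" "a \<le> b" "b \<le> n"
  shows "(\<Sum>b'=1..n. \<Sum>a'=1..b'. pmM sV n V f U g \<alpha> a b a' b')
    \<le> int (V.dim (Sab n V f a b)) - int (V.dim (Sab n V f (a - 1) b))"
proof -
  define S1 S0 where "S1 = Sab n V f a b" and "S0 = Sab n V f (a - 1) b"
  define \<psi> where "\<psi> T = int (V.dim (S1 \<inter> T)) - int (V.dim (S0 \<inter> T))" for T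
  define P Q where "P k = fab n f k b ` apre n V \<alpha> k (Sab n U g k k)"
    and "Q k = fab n f k b ` apre n V \<alpha> k {0}" for k
  obtain W where W: "finite W" "pmV n V b \<subseteq> V.span W" by (rule V.pmV_finite_dim)
  have \<psi>_mono: "\<psi> T1 \<le> \<psi> T2" if "V.subspace T1" "T1 \<subseteq> T2" "T2 \<subseteq> pmV n V b" for T1 T2
    unfolding \<psi>_def S0_def S1_def
    using V.dim_Int_diff_mono[OF V.subspace_Sab V.subspace_Sab V.Sab_pred_subset[OF assms(1,2)] that(1,2) W(1)]
      that(3) W(2) by blast
  have PQ: "V.subspace (P k)" "P k \<subseteq> pmV n V b" "V.subspace (Q k)" "Q k \<subseteq> pmV n V b"
    if "1 \<le> k" "k \<le> b" for k
  proof -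
    have "U.subspace {0}" by (simp add: U.subspace_def)
    then have "V.subspace (apre n V \<alpha> k (Sab n U g k k))" "V.subspace (apre n V \<alpha> k {0})"
      using subspace_apre[OF that(1)] U.subspace_Sab that(2) assms(3) by simp_all
    moreover have "apre n V \<alpha> k T \<subseteq> pmV n V k" for T by (auto simp: apre_def)
    ultimately show "V.subspace (P k)" "P k \<subseteq> pmV n V b" "V.subspace (Q k)" "Q k \<subseteq> pmV n V b"
      unfolding P_def Q_def using V.subspace_fab_image V.fab_pmV[OF that(2)] that(2) by blast+
  qed
  have "(\<Sum>b'=1..n. \<Sum>a'=1..b'. pmM sV n V f U g \<alpha> a b a' b')
      = (\<Sum>k=1..n. if k \<le> b then \<psi> (P k) - \<psi> (Q k) else 0)"
    unfolding sum_pmM_over_target_births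
    using assms(3) by (intro sum.cong) (auto simp: pmX_def \<psi>_def P_def Q_def S0_def S1_def)
  also have "\<dots> = sum (\<lambda>k. \<psi> (P k) - \<psi> (Q k)) {k \<in> {1..n}. k \<le> b}"
    by (rule sum.inter_filter[symmetric]) simp
  also have "\<dots> = (\<Sum>k=1..b. \<psi> (P k) - \<psi> (Q k))"
    by (rule sum.cong) (use assms(3) in auto)
  also have "\<dots> \<le> \<psi> (P b) - \<psi> (Q 1)"
  proof (rule sum_diff_le_first_last)
    show "1 \<le> b" using assms by simp
  next
    fix k assume k: "1 \<le> k" "k < b"
    have "P k \<subseteq> Q (Suc k)"
      unfolding P_def Q_def by (rule fab_image_apre_Sab_subset[OF k assms(3)])
    moreover have "V.subspace (P k)" "Q (Suc k) \<subseteq> pmV n V b"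
      using PQ k by simp_all
    ultimately show "\<psi> (P k) \<le> \<psi> (Q (Suc k))"
      using \<psi>_mono by blast
  qed
  also have "\<dots> \<le> \<psi> (pmV n V b) - \<psi> {0}"
  proof -
    have "\<psi> (P b) \<le> \<psi> (pmV n V b)"
      using \<psi>_mono PQ(1,2) assms by simp
    moreover have "V.subspace {0}" "{0} \<subseteq> Q 1"
      using V.subspace_0 PQ(3) assms by (auto simp: V.subspace_def)
    then have "\<psi> {0} \<le> \<psi> (Q 1)"
      using \<psi>_mono PQ(4) assms by simp
    ultimately show ?thesis by simp
  qed
  also have "\<dots> = int (V.dim S1) - int (V.dim S0)"
    using V.Sab_pmV by (simp add: \<psi>_def S0_def S1_def Int_absorb2 V.dim_eq_0_if_subset_zero)
  finally show ?thesis unfolding S1_def S0_def .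
qed

theorem sum_pmM_le_target_multiplicity:
  assumes "1 \<le> a'" "a' \<le> b'" "b' \<le> n"
  shows "(\<Sum>b=1..n. \<Sum>a=1..b. pmM sV n V f U g \<alpha> a b a' b')
    \<le> int (U.dim (Sab n U g a' b')) - int (U.dim (Sab n U g (a' - 1) b'))"
proof -
  define S1 S0 where "S1 = Sab n U g a' b'" and "S0 = Sab n U g (a' - 1) b'"
  define A A' where "A = apre n V \<alpha> b' S1" and "A' = apre n V \<alpha> b' S0"
  define R where "R = \<alpha> b' ` pmV n V b'"
  have b': "1 \<le> b'" "b' \<le> n" using assms by simp_all
  have "(\<Sum>b=1..n. \<Sum>a=1..b. pmM sV n V f U g \<alpha> a b a' b')
      = (\<Sum>b=1..n. if b' \<le> b then int (V.dim (kerf n V f b \<inter> fab n f b' b ` A))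
                                   - int (V.dim (kerf n V f b \<inter> fab n f b' b ` A')) else 0)"
    unfolding V.sum_pmM_over_source_births
    by (intro sum.cong) (auto simp: pmX_def V.Sab_diagonal A_def A'_def S0_def S1_def)
  also have "\<dots> = (\<Sum>b\<in>{b \<in> {1..n}. b' \<le> b}. int (V.dim (kerf n V f b \<inter> fab n f b' b ` A))
                                   - int (V.dim (kerf n V f b \<inter> fab n f b' b ` A')))"
    by (rule sum.inter_filter[symmetric]) simp
  also have "\<dots> = (\<Sum>b=b'..n. int (V.dim (kerf n V f b \<inter> fab n f b' b ` A))
                                   - int (V.dim (kerf n V f b \<inter> fab n f b' b ` A')))"
    by (rule sum.cong) (use b' in auto)
  also have "\<dots> = (\<Sum>b=b'..n. int (V.dim (kerf n V f b \<inter> fab n f b' b ` A)))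
        - (\<Sum>b=b'..n. int (V.dim (kerf n V f b \<inter> fab n f b' b ` A')))"
    by (rule sum_subtractf)
  also have "\<dots> = int (V.dim A) - int (V.dim A')"
  proof -
    have "V.subspace A" "V.subspace A'" "A \<subseteq> pmV n V b'" "A' \<subseteq> pmV n V b'"
      using subspace_apre[OF b' U.subspace_Sab] by (auto simp: A_def A'_def S0_def S1_def apre_def)
    then show ?thesis
      using V.sum_dim_kerf_Int_fab_image[OF _ _ b'(2)] by simp
  qed
  also have "\<dots> = int (U.dim (S1 \<inter> R)) - int (U.dim (S0 \<inter> R))"
    using dim_apre[OF b' U.subspace_Sab] by (simp add: A_def A'_def S0_def S1_def R_def)
  also have "\<dots> \<le> int (U.dim (S1 \<inter> pmV n U b')) - int (U.dim (S0 \<inter> pmV n U b'))"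
  proof -
    obtain W where "finite W" "pmV n U b' \<subseteq> U.span W" by (rule U.pmV_finite_dim)
    then show ?thesis
      using U.dim_Int_diff_mono[OF U.subspace_Sab U.subspace_Sab U.Sab_pred_subset[OF assms(1,2)]
          lin_on_subspace_image[OF lin_on_alpha[OF b'] V.subspace_pmV] alpha_pmV[OF b']]
      by (simp add: S0_def S1_def R_def)
  qed
  also have "\<dots> = int (U.dim S1) - int (U.dim S0)"
    using U.Sab_pmV by (simp add: S0_def S1_def Int_absorb2)
  finally show ?thesis unfolding S1_def S0_def .
qed

end

theorem mainTheorem1:
  fixes sV :: "'f::field \<Rightarrow> 'v::ab_group_add \<Rightarrow> 'v"
    and sU :: "'f \<Rightarrow> 'u::ab_group_add \<Rightarrow> 'u"
    and n :: nat and V :: "nat \<Rightarrow> 'v set" and f :: "nat \<Rightarrow> 'v \<Rightarrow> 'v"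
    and U :: "nat \<Rightarrow> 'u set" and g :: "nat \<Rightarrow> 'u \<Rightarrow> 'u"
    and \<alpha> :: "nat \<Rightarrow> 'v \<Rightarrow> 'u"
  assumes "pers_module sV n V f" and "pers_module sU n U g"
    and "pm_morphism sV sU n V f U g \<alpha>"
  shows "(\<forall>a b. 1 \<le> a \<and> a \<le> b \<and> b \<le> n \<longrightarrow>
            (\<Sum>b'=1..n. \<Sum>a'=1..b'. pmM sV n V f U g \<alpha> a b a' b')
              \<le> int (vector_space.dim sV (Sab n V f a b)) - int (vector_space.dim sV (Sab n V f (a - 1) b))
            \<and> int (vector_space.dim sV (Sab n V f a b)) - int (vector_space.dim sV (Sab n V f (a - 1) b))
              = pmD sV n V f a b)
       \<and> (\<forall>a' b'. 1 \<le> a' \<and> a' \<le> b' \<and> b' \<le> n \<longrightarrow>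
            (\<Sum>b=1..n. \<Sum>a=1..b. pmM sV n V f U g \<alpha> a b a' b')
              \<le> int (vector_space.dim sU (Sab n U g a' b')) - int (vector_space.dim sU (Sab n U g (a' - 1) b'))
            \<and> int (vector_space.dim sU (Sab n U g a' b')) - int (vector_space.dim sU (Sab n U g (a' - 1) b'))
              = pmD sU n U g a' b')"
proof -
  interpret persistence_morphism sV sU n V f U g \<alpha>
    using assms by (simp add: persistence_morphism_def persistence_morphism_axioms_def
        persistence_module_def)
  show ?thesis
    using sum_pmM_le_source_multiplicity sum_pmM_le_target_multiplicity by (simp add: pmD_def)
qed


end
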